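(* Assume $\theta_{12}=\theta_{34}=1$. Let $U\in M_{n\times k}(\tilde{\mathcal A})$ satisfy $U^*U=1_k$, put $Q=1-UU^*$, and consider the connection $\nabla_j=\partial_j+A_j$, $A_j=U^*\partial_jU$ ($j=1,\dots,4$), with curvature $F_{mn}=\partial_mA_n-\partial_nA_m+[A_m,A_n]$. Then the anti-self-duality equations $$F_{12}=-F_{34},\qquad F_{13}=F_{24},\qquad F_{14}=-F_{23}$$ are equivalent to the single equation $$U^*\big[-3p_0^*Qp_0+p_1^*Qp_1+p_2^*Qp_2+p_3^*Qp_3\big]U=0,$$ where $p_0=\tfrac12\sigma_1\hat x_1-\tfrac12\sigma_2\hat x_2-\tfrac12\sigma_3\hat x_3+\tfrac i2\hat x_4$, $p_1=\tfrac1{\sqrt2}\sigma_1\hat x_1-\tfrac{i}{\sqrt2}\hat x_4$, $p_2=\tfrac1{\sqrt6}\sigma_1\hat x_1+\sqrt{\tfrac23}\,\sigma_2\hat x_2+\tfrac{i}{\sqrt6}\hat x_4$, $p_3=\tfrac1{2\sqrt3}\sigma_1\hat x_1-\tfrac1{2\sqrt3}\sigma_2\hat x_2+\tfrac{\sqrt3}{2}\sigma_3\hat x_3+\tfrac{i}{2\sqrt3}\hat x_4$, $\sigma_1,\sigma_2,\sigma_3$ are the Pauli matrices, and in this equation $U,U^*,Q$ stand for $U\otimes\mathrm{Id}_2$, $U^*\otimes\mathrm{Id}_2$, $Q\otimes\mathrm{Id}_2$ (the $\hat x_i$ acting diagonally on all matrix indices).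
   Context: $\hat x_1,\dots,\hat x_4$ are the canonical self-adjoint operators on $L^2(\mathbb R^2)$ with $[\hat x_1,\hat x_2]=i\theta_{12}$, $[\hat x_3,\hat x_4]=i\theta_{34}$ and all other commutators zero. $\mathcal A$ is one of the operator algebras $\mathcal S$, $\Gamma^m_\rho$, $\mathcal K^\infty$ (Weyl quantizations of the Schwartz space, of a symbol class with $m<0$, and of smooth functions with all derivatives vanishing at infinity), $\tilde{\mathcal A}$ its unitization. Derivations act entrywise on matrices by $\partial_1 f=\frac{i}{\theta_{12}}[\hat x_2,f]$, $\partial_2 f=-\frac{i}{\theta_{12}}[\hat x_1,f]$, $\partial_3f=\frac{i}{\theta_{34}}[\hat x_4,f]$, $\partial_4f=-\frac{i}{\theta_{34}}[\hat x_3,f]$. Pauli matrices: $\sigma_1=\begin{pmatrix}0&1\\1&0\end{pmatrix}$, $\sigma_2=\begin{pmatrix}0&-i\\i&0\end{pmatrix}$, $\sigma_3=\begin{pmatrix}1&0\\0&-1\end{pmatrix}$. *)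

theory Defs
  imports Complex_Main
begin

text \<open>Matrices with entries in an (operator) algebra are represented as functions
  nat \<Rightarrow> nat \<Rightarrow> 'a; all dimensions are carried explicitly.\<close>

type_synonym 'a mat = "nat \<Rightarrow> nat \<Rightarrow> 'a"

definition mmul :: "nat \<Rightarrow> 'a::ring_1 mat \<Rightarrow> 'a mat \<Rightarrow> 'a mat" where
  "mmul m A B = (\<lambda>i j. \<Sum>l<m. A i l * B l j)"

definition madd :: "'a::ring_1 mat \<Rightarrow> 'a mat \<Rightarrow> 'a mat" where
  "madd A B = (\<lambda>i j. A i j + B i j)"

definition msub :: "'a::ring_1 mat \<Rightarrow> 'a mat \<Rightarrow> 'a mat" where
  "msub A B = (\<lambda>i j. A i j - B i j)"

definition mneg :: "'a::ring_1 mat \<Rightarrow> 'a mat" where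
  "mneg A = (\<lambda>i j. - A i j)"

definition madj :: "('a \<Rightarrow> 'a) \<Rightarrow> 'a mat \<Rightarrow> 'a mat" where
  "madj st A = (\<lambda>i j. st (A j i))"

definition mid :: "'a::ring_1 mat" where
  "mid = (\<lambda>i j. if i = j then 1 else 0)"

text \<open>diagonal matrix a \<cdot> Id (an operator acting diagonally on matrix indices)\<close>
definition dg :: "'a::ring_1 \<Rightarrow> 'a mat" where
  "dg a = (\<lambda>i j. if i = j then a else 0)"

definition meq :: "nat \<Rightarrow> nat \<Rightarrow> 'a mat \<Rightarrow> 'a mat \<Rightarrow> bool" where
  "meq r s A B \<longleftrightarrow> (\<forall>i<r. \<forall>j<s. A i j = B i j)"

text \<open>Abstract complex unital *-algebra: c embeds the complex scalars (centrally),
  st is the adjoint operation.\<close>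
definition star_alg :: "(complex \<Rightarrow> 'a::ring_1) \<Rightarrow> ('a \<Rightarrow> 'a) \<Rightarrow> bool" where
  "star_alg c st \<longleftrightarrow>
     (\<forall>z w. c (z + w) = c z + c w) \<and> (\<forall>z w. c (z * w) = c z * c w) \<and> c 1 = 1 \<and>
     (\<forall>z a. c z * a = a * c z) \<and>
     (\<forall>a b. st (a + b) = st a + st b) \<and> (\<forall>a b. st (a * b) = st b * st a) \<and>
     (\<forall>a. st (st a) = a) \<and> (\<forall>z. st (c z) = c (cnj z))"

definition comm :: "'a::ring_1 \<Rightarrow> 'a \<Rightarrow> 'a" where
  "comm a b = a * b - b * a"

definition coords :: "(complex \<Rightarrow> 'a::ring_1) \<Rightarrow> ('a \<Rightarrow> 'a) \<Rightarrow> (nat \<Rightarrow> 'a) \<Rightarrow> bool" where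
  "coords c st x \<longleftrightarrow>
     (\<forall>j\<in>{1..4}. st (x j) = x j) \<and>
     comm (x 1) (x 2) = c \<i> \<and> comm (x 3) (x 4) = c \<i> \<and>
     comm (x 1) (x 3) = 0 \<and> comm (x 1) (x 4) = 0 \<and>
     comm (x 2) (x 3) = 0 \<and> comm (x 2) (x 4) = 0"

definition der :: "(complex \<Rightarrow> 'a::ring_1) \<Rightarrow> (nat \<Rightarrow> 'a) \<Rightarrow> nat \<Rightarrow> 'a \<Rightarrow> 'a" where
  "der c x j f =
     (if j = 1 then c \<i> * comm (x 2) f
      else if j = 2 then - (c \<i> * comm (x 1) f)
      else if j = 3 then c \<i> * comm (x 4) f
      else - (c \<i> * comm (x 3) f))"

definition mder :: "(complex \<Rightarrow> 'a::ring_1) \<Rightarrow> (nat \<Rightarrow> 'a) \<Rightarrow> nat \<Rightarrow> 'a mat \<Rightarrow> 'a mat" where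
  "mder c x j M = (\<lambda>a b. der c x j (M a b))"

definition gpot :: "(complex \<Rightarrow> 'a::ring_1) \<Rightarrow> ('a \<Rightarrow> 'a) \<Rightarrow> (nat \<Rightarrow> 'a) \<Rightarrow> nat \<Rightarrow> 'a mat \<Rightarrow> nat \<Rightarrow> 'a mat" where
  "gpot c st x n U j = mmul n (madj st U) (mder c x j U)"

definition curv :: "(complex \<Rightarrow> 'a::ring_1) \<Rightarrow> ('a \<Rightarrow> 'a) \<Rightarrow> (nat \<Rightarrow> 'a) \<Rightarrow> nat \<Rightarrow> nat \<Rightarrow> 'a mat \<Rightarrow> nat \<Rightarrow> nat \<Rightarrow> 'a mat" where
  "curv c st x n k U m l =
     madd (msub (mder c x m (gpot c st x n U l)) (mder c x l (gpot c st x n U m)))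
          (msub (mmul k (gpot c st x n U m) (gpot c st x n U l))
                (mmul k (gpot c st x n U l) (gpot c st x n U m)))"

text \<open>Pauli matrices (index 0 = identity), indices 0,1\<close>
definition pauli :: "nat \<Rightarrow> complex mat" where
  "pauli a = (\<lambda>s t.
     if a = 0 then (if s = t then 1 else 0)
     else if a = 1 then (if s = t then 0 else 1)
     else if a = 2 then (if s = t then 0 else if s = 0 then - \<i> else \<i>)
     else (if s = t then (if s = 0 then 1 else -1) else 0))"

text \<open>p_r = a_r1 sigma1 x1 + a_r2 sigma2 x2 + a_r3 sigma3 x3 + a_r4 Id x4;
  pcoef r mu is the complex coefficient of x mu, pmat r is the 2x2 operator matrix\<close>
definition pcoef :: "nat \<Rightarrow> nat \<Rightarrow> complex" where
  "pcoef r mu =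
     (if r = 0 then (if mu = 1 then 1/2 else if mu = 2 then -1/2 else if mu = 3 then -1/2 else \<i>/2)
      else if r = 1 then (if mu = 1 then 1 / of_real (sqrt 2) else if mu = 2 then 0 else if mu = 3 then 0
                          else - \<i> / of_real (sqrt 2))
      else if r = 2 then (if mu = 1 then 1 / of_real (sqrt 6) else if mu = 2 then of_real (sqrt (2/3))
                          else if mu = 3 then 0 else \<i> / of_real (sqrt 6))
      else (if mu = 1 then 1 / (2 * of_real (sqrt 3)) else if mu = 2 then - 1 / (2 * of_real (sqrt 3))
            else if mu = 3 then of_real (sqrt 3) / 2 else \<i> / (2 * of_real (sqrt 3))))"

definition pmat :: "(complex \<Rightarrow> 'a::ring_1) \<Rightarrow> (nat \<Rightarrow> 'a) \<Rightarrow> nat \<Rightarrow> 'a mat" where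
  "pmat c x r = (\<lambda>s t. \<Sum>mu\<in>{1..4}. c (pcoef r mu * pauli (if mu = 4 then 0 else mu) s t) * x mu)"

text \<open>Block (s,t) (s,t < 2) of the 2k x 2k matrix
  (U* (x) Id2) [ -3 p0* (Q(x)Id2) p0 + p1* (Q(x)Id2) p1 + p2* .. + p3* .. ] (U (x) Id2),
  where Q = 1 - U U* (n x n) and the entries of p_r act diagonally on the n indices.\<close>
definition asd_block :: "(complex \<Rightarrow> 'a::ring_1) \<Rightarrow> ('a \<Rightarrow> 'a) \<Rightarrow> (nat \<Rightarrow> 'a) \<Rightarrow> nat \<Rightarrow> nat \<Rightarrow> 'a mat \<Rightarrow> nat \<Rightarrow> nat \<Rightarrow> 'a mat" where
  "asd_block c st x n k U s t =
     (let Q = msub mid (mmul k U (madj st U));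
          w = (\<lambda>r::nat. if r = 0 then -3 else (1::complex));
          inner = (\<lambda>i j. \<Sum>r<4. \<Sum>u<2.
                     c (w r) * mmul n (mmul n (dg (st (pmat c x r u s))) Q) (dg (pmat c x r u t)) i j)
      in mmul n (mmul n (madj st U) inner) U)"

end

theory Submission
  imports Defs
begin

text \<open>
  With \<open>\<partial>\<^sub>j = i [y\<^sub>j, \<cdot>]\<close>, \<open>y = (x\<^sub>2, -x\<^sub>1, x\<^sub>4, -x\<^sub>3)\<close>, the potential is
  \<open>A\<^sub>j = i (U\<^sup>* y\<^sub>j U - y\<^sub>j)\<close> and the curvature becomes
  \<open>F\<^sub>m\<^sub>l = U\<^sup>* (y\<^sub>m Q y\<^sub>l - y\<^sub>l Q y\<^sub>m) U\<close>, \<open>Q = 1 - U U\<^sup>*\<close>; here the commutators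
  \<open>[y\<^sub>m, y\<^sub>l]\<close> are scalars, so they pass through \<open>U\<^sup>* \<cdot> U\<close>.
  Expanding the \<open>p\<^sub>r\<close> in the coordinates, block \<open>(s, t)\<close> of
  \<open>U\<^sup>* [\<Sum>\<^sub>r w\<^sub>r p\<^sub>r\<^sup>* Q p\<^sub>r] U\<close> is a quadratic form
  \<open>\<Sum> K\<^sup>s\<^sup>t\<^sub>\<mu>\<^sub>\<nu> U\<^sup>* x\<^sub>\<mu> Q x\<^sub>\<nu> U\<close> whose coefficient matrices are
  antisymmetric. Hence only the skew parts \<open>U\<^sup>* (x\<^sub>\<mu> Q x\<^sub>\<nu> - x\<^sub>\<nu> Q x\<^sub>\<mu>) U\<close>,
  i.e. curvature components, survive: the blocks are \<open>\<plusminus>i (F\<^sub>1\<^sub>2 + F\<^sub>3\<^sub>4)\<close> and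
  \<open>\<plusminus>(F\<^sub>1\<^sub>3 - F\<^sub>2\<^sub>4) + i (F\<^sub>1\<^sub>4 + F\<^sub>2\<^sub>3)\<close>, which vanish together iff the
  three anti-self-duality equations hold, since \<open>2\<close> and \<open>i\<close> are invertible scalars.
\<close>

lemma sum_1_4: "(\<Sum>i\<in>{1..4::nat}. f i) = f 1 + f 2 + f 3 + f 4"
proof -
  have "{1..4::nat} = {1, 2, 3, 4}" by auto
  then show ?thesis by (simp add: add.assoc)
qed

definition mcomm :: "nat \<Rightarrow> 'a::ring_1 mat \<Rightarrow> 'a mat \<Rightarrow> 'a mat" where
  "mcomm m A B = msub (mmul m A B) (mmul m B A)"

lemma mmul_dg_left: "i < m \<Longrightarrow> mmul m (dg \<alpha>) A i j = \<alpha> * A i j"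
  by (simp add: mmul_def dg_def if_distrib[of "\<lambda>w. w * _"] cong: if_cong)

lemma mmul_dg_right: "j < m \<Longrightarrow> mmul m A (dg \<beta>) i j = A i j * \<beta>"
  by (simp add: mmul_def dg_def if_distrib[of "\<lambda>w. _ * w"] cong: if_cong)

lemma mmul_dg_dg: "i < m \<Longrightarrow> j < m \<Longrightarrow> mmul m (mmul m (dg \<alpha>) A) (dg \<beta>) i j = \<alpha> * A i j * \<beta>"
  by (simp add: mmul_dg_left mmul_dg_right)

lemma mmul_msub_dg:
  assumes "a < m" "b < m"
  shows "mmul m (msub B (dg y)) (msub C (dg z)) a b
       = mmul m B C a b - B a b * z - y * C a b + dg (y * z) a b"
proof -
  have "mmul m (msub B (dg y)) (msub C (dg z)) a b
      = mmul m B C a b - mmul m B (dg z) a b - mmul m (dg y) C a b + mmul m (dg y) (dg z) a b"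
    by (simp add: mmul_def msub_def algebra_simps sum_subtractf sum.distrib)
  then show ?thesis
    using assms by (simp add: mmul_dg_left mmul_dg_right) (simp add: dg_def)
qed

lemma all_less_2: "(\<forall>s<2. P s) \<longleftrightarrow> P 0 \<and> P (1::nat)"
  by (auto simp: less_2_cases_iff)

lemma all_less_cong2:
  "(\<And>a b. a < k \<Longrightarrow> b < k \<Longrightarrow> P a b \<longleftrightarrow> Q a b) \<Longrightarrow>
    (\<forall>a<k. \<forall>b<k. P a b) \<longleftrightarrow> (\<forall>a<(k::nat). \<forall>b<k. Q a b)"
  by blast

locale star_algebra =
  fixes c :: "complex \<Rightarrow> 'a::ring_1" and st :: "'a \<Rightarrow> 'a"
  assumes star_alg: "star_alg c st"
begin

lemma scalar_add: "c (z + w) = c z + c w"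
  and scalar_mult: "c (z * w) = c z * c w"
  and scalar_one: "c 1 = 1"
  and scalar_commute: "c z * a = a * c z"
  and adj_add: "st (a + b) = st a + st b"
  and adj_mult: "st (a * b) = st b * st a"
  and adj_scalar: "st (c z) = c (cnj z)"
  using star_alg unfolding star_alg_def by blast+

lemma scalar_zero: "c 0 = 0"
  using scalar_add[of 0 0] by simp

lemma scalar_minus: "c (- z) = - c z"
  using scalar_add[of "- z" z] by (simp add: scalar_zero eq_neg_iff_add_eq_0)

lemma scalar_sum: "c (\<Sum>i\<in>A. f i) = (\<Sum>i\<in>A. c (f i))"
  by (induction A rule: infinite_finite_induct) (simp_all add: scalar_zero scalar_add)

lemma adj_zero: "st 0 = 0"
  using adj_add[of 0 0] by simp

lemma adj_sum: "st (\<Sum>i\<in>A. f i) = (\<Sum>i\<in>A. st (f i))"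
  by (induction A rule: infinite_finite_induct) (simp_all add: adj_zero adj_add)

lemma scalar_i_squared: "c \<i> * c \<i> = -1"
  using scalar_mult[of \<i> \<i>] scalar_minus[of 1] by (simp add: scalar_one)

lemma mult_scalar_left_commute: "a * (c z * b) = c z * (a * b)"
  by (metis mult.assoc scalar_commute)

lemma scalar_mult_mult: "(c z * a) * (c w * b) = c (z * w) * (a * b)"
  by (metis mult.assoc mult_scalar_left_commute scalar_mult)

lemma comm_scalar_right: "comm y (c z * g) = c z * comm y g"
  unfolding comm_def mult_scalar_left_commute by (simp add: mult.assoc right_diff_distrib)

lemma scalar_i_mult_eq_0_iff: "c \<i> * y = 0 \<longleftrightarrow> y = 0"
proof
  assume "c \<i> * y = 0"
  then have "(c \<i> * c \<i>) * y = 0" by (simp add: mult.assoc)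
  then show "y = 0" by (simp add: scalar_i_squared)
qed simp

lemma double_eq_0_iff: "y + y = 0 \<longleftrightarrow> (y :: 'a) = 0"
proof
  assume "y + y = 0"
  moreover have "c (1/2) * (y + y) = y"
    using scalar_add[of "1/2" "1/2"] by (simp add: scalar_one distrib_left flip: distrib_right)
  ultimately show "y = 0" by simp
qed simp

lemma block_system_eq_0_iff:
  "(c \<i> * p = 0 \<and> r - c \<i> * q = 0 \<and> - r - c \<i> * q = 0) \<longleftrightarrow> (p = 0 \<and> q = 0 \<and> r = 0)"
proof -
  have "(r - c \<i> * q = 0 \<and> - r - c \<i> * q = 0) \<longleftrightarrow> (c \<i> * q + c \<i> * q = 0 \<and> r = c \<i> * q)"
    by (metis add_diff_cancel_left' diff_add_cancel diff_minus_eq_add eq_iff_diff_eq_0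
        minus_diff_eq neg_eq_iff_add_eq_0)
  then show ?thesis
    by (auto simp: double_eq_0_iff scalar_i_mult_eq_0_iff)
qed

end

definition theta :: "nat \<Rightarrow> nat \<Rightarrow> complex" where
  "theta i j = (if (i, j) = (1, 2) \<or> (i, j) = (3, 4) then 1
     else if (i, j) = (2, 1) \<or> (i, j) = (4, 3) then -1 else 0)"

locale isometry_connection = star_algebra c st for c :: "complex \<Rightarrow> 'a::ring_1" and st +
  fixes x :: "nat \<Rightarrow> 'a" and n k :: nat and U :: "'a mat"
  assumes coords: "coords c st x"
    and isometry: "meq k k (mmul n (madj st U) U) mid"
begin

lemma isometry_entry: "a < k \<Longrightarrow> b < k \<Longrightarrow> (\<Sum>l<n. st (U l a) * U l b) = dg 1 a b"
  using isometry by (simp add: meq_def mmul_def madj_def mid_def dg_def)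

lemma coords_selfadjoint: "mu \<in> {1..4} \<Longrightarrow> st (x mu) = x mu"
  using coords unfolding coords_def by blast

lemma coords_comm:
  "comm (x 1) (x 2) = c \<i>" "comm (x 3) (x 4) = c \<i>" "comm (x 1) (x 3) = 0"
  "comm (x 1) (x 4) = 0" "comm (x 2) (x 3) = 0" "comm (x 2) (x 4) = 0"
  using coords unfolding coords_def by auto

lemma comm_coords:
  assumes "i \<in> {1..4}" "j \<in> {1..4}"
  shows "comm (x i) (x j) = c (\<i> * theta i j)"
proof -
  have swap: "comm a b = - comm b a" and self: "comm a a = 0" for a b :: 'a
    by (simp_all add: comm_def)
  note table = coords_comm swap[of "x 2" "x 1"] swap[of "x 4" "x 3"] swap[of "x 3" "x 1"]
    swap[of "x 4" "x 1"] swap[of "x 3" "x 2"] swap[of "x 4" "x 2"]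
  from assms have "i \<in> {1, 2, 3, 4}" "j \<in> {1, 2, 3, 4}"
    by auto
  \<comment> \<open>the case split substitutes \<open>Suc 0\<close> for the index \<open>1\<close> (\<open>One_nat_def\<close> is a simp rule)\<close>
  then show ?thesis
    by (elim insertE emptyE)
      (simp_all add: table[unfolded One_nat_def] self theta_def scalar_zero scalar_minus)
qed

definition generator :: "nat \<Rightarrow> 'a" where
  "generator j = (if j = 1 then x 2 else if j = 2 then - x 1 else if j = 3 then x 4 else - x 3)"

lemma der_generator: "der c x j f = c \<i> * comm (generator j) f"
  by (simp add: der_def generator_def comm_def algebra_simps)

lemma comm_generator_in_range: "comm (generator m) (generator l) \<in> range c"
proof -
  have minus: "comm (- a) b = - comm a b" "comm a (- b) = - comm a b" for a b :: 'a
    by (simp_all add: comm_def)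
  have neg: "- z \<in> range c" if "z \<in> range c" for z
    using that scalar_minus by (metis imageE rangeI)
  have "\<exists>i\<in>{1..4}. generator j = x i \<or> generator j = - x i" for j
    by (auto simp: generator_def)
  then obtain i j where "i \<in> {1..4}" "j \<in> {1..4}"
    and "generator m = x i \<or> generator m = - x i" "generator l = x j \<or> generator l = - x j"
    by metis
  with comm_coords[of i j] show ?thesis
    by (auto simp: minus neg)
qed

text \<open>\<open>compress \<alpha>\<close> is \<open>U\<^sup>* (\<alpha> \<otimes> 1) U\<close>.\<close>
definition compress :: "'a \<Rightarrow> 'a mat" where
  "compress \<alpha> a b = (\<Sum>l<n. st (U l a) * \<alpha> * U l b)"

lemma compress_scalar: "a < k \<Longrightarrow> b < k \<Longrightarrow> compress (c z) a b = dg (c z) a b"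
proof -
  assume "a < k" "b < k"
  have "compress (c z) a b = c z * (\<Sum>l<n. st (U l a) * U l b)"
    by (simp add: compress_def sum_distrib_left mult.assoc mult_scalar_left_commute)
  with \<open>a < k\<close> \<open>b < k\<close> show ?thesis
    by (simp add: isometry_entry dg_def)
qed

lemma compress_diff: "compress (\<alpha> - \<beta>) a b = compress \<alpha> a b - compress \<beta> a b"
  by (simp add: compress_def algebra_simps sum_subtractf)

lemma compress_sum: "compress (\<Sum>i\<in>I. f i) a b = (\<Sum>i\<in>I. compress (f i) a b)"
  by (simp add: compress_def sum_distrib_left sum_distrib_right sum.swap[of _ I])

lemma compress_minus: "compress (- \<alpha>) a b = - compress \<alpha> a b"
  by (simp add: compress_def sum_negf)

lemma compress_scalar_mult: "compress (c z * \<alpha>) a b = c z * compress \<alpha> a b"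
  by (simp add: compress_def mult_scalar_left_commute mult.assoc flip: sum_distrib_left)

definition shifted_compress :: "nat \<Rightarrow> 'a mat" where
  "shifted_compress j = msub (compress (generator j)) (dg (generator j))"

lemma gpot_eq: "a < k \<Longrightarrow> b < k \<Longrightarrow> gpot c st x n U j a b = c \<i> * shifted_compress j a b"
proof -
  assume ab: "a < k" "b < k"
  have "gpot c st x n U j a b
      = (\<Sum>l<n. c \<i> * (st (U l a) * generator j * U l b - st (U l a) * U l b * generator j))"
    by (simp add: gpot_def mmul_def madj_def mder_def der_generator comm_def mult_scalar_left_commute
        right_diff_distrib mult.assoc)
  also have "\<dots> = c \<i> * (compress (generator j) a b - (\<Sum>l<n. st (U l a) * U l b) * generator j)"
    by (simp add: compress_def sum_distrib_left sum_distrib_right sum_subtractf right_diff_distrib)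
  finally show ?thesis
    using ab by (simp add: isometry_entry shifted_compress_def msub_def dg_def)
qed

lemma der_gpot:
  "a < k \<Longrightarrow> b < k
    \<Longrightarrow> der c x m (gpot c st x n U l a b) = - comm (generator m) (shifted_compress l a b)"
  by (simp add: gpot_eq der_generator comm_scalar_right mult_scalar_left_commute
      flip: mult.assoc add: scalar_i_squared)

lemma mmul_gpot:
  "a < k \<Longrightarrow> b < k \<Longrightarrow> mmul k (gpot c st x n U m) (gpot c st x n U l) a b
    = - mmul k (shifted_compress m) (shifted_compress l) a b"
  by (simp add: mmul_def gpot_eq scalar_mult_mult scalar_minus scalar_one sum_negf flip: scalar_mult)

lemma curv_eq:
  assumes "a < k" "b < k"
  shows "curv c st x n k U m l a b
    = dg (comm (generator m) (generator l)) a b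
      - mcomm k (compress (generator m)) (compress (generator l)) a b"
proof -
  have "curv c st x n k U m l a b
      = - comm (generator m) (shifted_compress l a b) + comm (generator l) (shifted_compress m a b)
        - mmul k (shifted_compress m) (shifted_compress l) a b
        + mmul k (shifted_compress l) (shifted_compress m) a b"
    using assms by (simp add: curv_def madd_def msub_def mder_def der_gpot mmul_gpot)
  then show ?thesis
    using assms by (simp add: shifted_compress_def mmul_msub_dg)
      (simp add: mcomm_def msub_def dg_def comm_def algebra_simps)
qed

text \<open>\<open>defect \<alpha> \<beta>\<close> is \<open>U\<^sup>* \<alpha> Q \<beta> U\<close> with \<open>Q = 1 - U U\<^sup>*\<close>.\<close>
definition defect :: "'a \<Rightarrow> 'a \<Rightarrow> 'a mat" where
  "defect \<alpha> \<beta> a b = compress (\<alpha> * \<beta>) a b - mmul k (compress \<alpha>) (compress \<beta>) a b"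

lemma defect_skew:
  "defect \<alpha> \<beta> a b - defect \<beta> \<alpha> a b
    = compress (comm \<alpha> \<beta>) a b - mcomm k (compress \<alpha>) (compress \<beta>) a b"
  by (simp add: defect_def comm_def compress_diff mcomm_def msub_def)

lemma curv_eq_defect:
  assumes "a < k" "b < k"
  shows "curv c st x n k U m l a b
    = defect (generator m) (generator l) a b - defect (generator l) (generator m) a b"
proof -
  obtain z where "comm (generator m) (generator l) = c z"
    using comm_generator_in_range by blast
  with assms show ?thesis
    by (simp add: curv_eq defect_skew compress_scalar)
qed

definition sandwich :: "'a mat \<Rightarrow> 'a mat" where
  "sandwich \<phi> = mmul n (mmul n (madj st U) \<phi>) U"

lemma sandwich_entry:
  "sandwich \<phi> a b = (\<Sum>l2<n. \<Sum>l1<n. st (U l1 a) * \<phi> l1 l2 * U l2 b)"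
  by (simp add: sandwich_def mmul_def madj_def sum_distrib_right)

lemma sandwich_cong:
  "(\<And>i j. i < n \<Longrightarrow> j < n \<Longrightarrow> \<phi> i j = \<psi> i j) \<Longrightarrow> sandwich \<phi> a b = sandwich \<psi> a b"
  by (simp add: sandwich_entry)

lemma sandwich_sum:
  "sandwich (\<lambda>i j. \<Sum>r\<in>R. \<phi> r i j) a b = (\<Sum>r\<in>R. sandwich (\<phi> r) a b)"
  by (simp add: sandwich_entry sum_distrib_left sum_distrib_right sum.swap[of _ R])

lemma sandwich_scalar_mult:
  "sandwich (\<lambda>i j. c z * \<phi> i j) a b = c z * sandwich \<phi> a b"
  by (simp add: sandwich_entry mult_scalar_left_commute mult.assoc flip: sum_distrib_left)

lemma sandwich_diff:
  "sandwich (\<lambda>i j. \<phi> i j - \<psi> i j) a b = sandwich \<phi> a b - sandwich \<psi> a b"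
  by (simp add: sandwich_entry algebra_simps sum_subtractf)

lemma sandwich_dg: "sandwich (dg \<gamma>) a b = compress \<gamma> a b"
  by (simp add: sandwich_entry compress_def dg_def if_distrib[of "\<lambda>w. _ * w * _"] cong: if_cong)

lemma sandwich_rank_one:
  "sandwich (\<lambda>i j. \<alpha> * U i q * (st (U j q) * \<beta>)) a b = compress \<alpha> a q * compress \<beta> q b"
  unfolding sandwich_entry compress_def sum_product by (subst sum.swap) (simp add: mult.assoc)

lemma sandwich_projection:
  assumes "a < k" "b < k"
  shows "sandwich (mmul n (mmul n (dg \<alpha>) (msub mid (mmul k U (madj st U)))) (dg \<beta>)) a b
    = defect \<alpha> \<beta> a b"
proof -
  have "sandwich (mmul n (mmul n (dg \<alpha>) (msub mid (mmul k U (madj st U)))) (dg \<beta>)) a b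
      = sandwich (\<lambda>i j. dg (\<alpha> * \<beta>) i j - (\<Sum>q<k. \<alpha> * U i q * (st (U j q) * \<beta>))) a b"
    by (rule sandwich_cong)
      (simp add: mmul_dg_dg, simp add: msub_def mid_def dg_def mmul_def madj_def algebra_simps
        sum_distrib_left sum_distrib_right)
  also have "\<dots> = compress (\<alpha> * \<beta>) a b - mmul k (compress \<alpha>) (compress \<beta>) a b"
    by (simp add: sandwich_diff sandwich_dg sandwich_sum sandwich_rank_one mmul_def)
  finally show ?thesis
    by (simp add: defect_def)
qed

end

definition pmat_coeff :: "nat \<Rightarrow> nat \<Rightarrow> nat \<Rightarrow> nat \<Rightarrow> complex" where
  "pmat_coeff r u t mu = pcoef r mu * pauli (if mu = 4 then 0 else mu) u t"

definition asd_coeff :: "nat \<Rightarrow> nat \<Rightarrow> nat \<Rightarrow> nat \<Rightarrow> complex" where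
  "asd_coeff s t mu nu =
     (\<Sum>r<4. \<Sum>u<2. (if r = 0 then -3 else 1) * (cnj (pmat_coeff r u s mu) * pmat_coeff r u t nu))"

lemma sqrt_6: "sqrt 6 = sqrt 2 * sqrt 3"
  by (simp flip: real_sqrt_mult)

lemma sqrt_mult_self_left: "sqrt 2 * (sqrt 2 * z) = 2 * z" "sqrt 3 * (sqrt 3 * z) = 3 * z"
  by (simp_all flip: mult.assoc)

lemmas asd_coeff_simps = asd_coeff_def pmat_coeff_def pauli_def pcoef_def numeral_eq_Suc sqrt_6
  real_sqrt_divide complex_eq_iff sqrt_mult_self_left

lemma asd_coeff_00:
  "asd_coeff 0 0 1 1 = 0"     "asd_coeff 0 0 1 2 = \<i>"   "asd_coeff 0 0 1 3 = 0"     "asd_coeff 0 0 1 4 = 0"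
  "asd_coeff 0 0 2 1 = - \<i>" "asd_coeff 0 0 2 2 = 0"     "asd_coeff 0 0 2 3 = 0"     "asd_coeff 0 0 2 4 = 0"
  "asd_coeff 0 0 3 1 = 0"     "asd_coeff 0 0 3 2 = 0"     "asd_coeff 0 0 3 3 = 0"     "asd_coeff 0 0 3 4 = \<i>"
  "asd_coeff 0 0 4 1 = 0"     "asd_coeff 0 0 4 2 = 0"     "asd_coeff 0 0 4 3 = - \<i>" "asd_coeff 0 0 4 4 = 0"
  by (simp_all add: asd_coeff_simps field_simps)

lemma asd_coeff_01:
  "asd_coeff 0 1 1 1 = 0"     "asd_coeff 0 1 1 2 = 0"     "asd_coeff 0 1 1 3 = -1"    "asd_coeff 0 1 1 4 = - \<i>"
  "asd_coeff 0 1 2 1 = 0"     "asd_coeff 0 1 2 2 = 0"     "asd_coeff 0 1 2 3 = - \<i>" "asd_coeff 0 1 2 4 = 1"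
  "asd_coeff 0 1 3 1 = 1"     "asd_coeff 0 1 3 2 = \<i>"   "asd_coeff 0 1 3 3 = 0"     "asd_coeff 0 1 3 4 = 0"
  "asd_coeff 0 1 4 1 = \<i>"   "asd_coeff 0 1 4 2 = -1"    "asd_coeff 0 1 4 3 = 0"     "asd_coeff 0 1 4 4 = 0"
  by (simp_all add: asd_coeff_simps field_simps)

lemma asd_coeff_10:
  "asd_coeff 1 0 1 1 = 0"     "asd_coeff 1 0 1 2 = 0"     "asd_coeff 1 0 1 3 = 1"     "asd_coeff 1 0 1 4 = - \<i>"
  "asd_coeff 1 0 2 1 = 0"     "asd_coeff 1 0 2 2 = 0"     "asd_coeff 1 0 2 3 = - \<i>" "asd_coeff 1 0 2 4 = -1"
  "asd_coeff 1 0 3 1 = -1"    "asd_coeff 1 0 3 2 = \<i>"   "asd_coeff 1 0 3 3 = 0"     "asd_coeff 1 0 3 4 = 0"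
  "asd_coeff 1 0 4 1 = \<i>"   "asd_coeff 1 0 4 2 = 1"     "asd_coeff 1 0 4 3 = 0"     "asd_coeff 1 0 4 4 = 0"
  by (simp_all add: asd_coeff_simps field_simps)

lemma asd_coeff_11:
  "asd_coeff 1 1 1 1 = 0"     "asd_coeff 1 1 1 2 = - \<i>" "asd_coeff 1 1 1 3 = 0"     "asd_coeff 1 1 1 4 = 0"
  "asd_coeff 1 1 2 1 = \<i>"   "asd_coeff 1 1 2 2 = 0"     "asd_coeff 1 1 2 3 = 0"     "asd_coeff 1 1 2 4 = 0"
  "asd_coeff 1 1 3 1 = 0"     "asd_coeff 1 1 3 2 = 0"     "asd_coeff 1 1 3 3 = 0"     "asd_coeff 1 1 3 4 = - \<i>"
  "asd_coeff 1 1 4 1 = 0"     "asd_coeff 1 1 4 2 = 0"     "asd_coeff 1 1 4 3 = \<i>"   "asd_coeff 1 1 4 4 = 0"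
  by (simp_all add: asd_coeff_simps field_simps)

context isometry_connection begin

lemma defect_sum_left: "defect (\<Sum>i\<in>I. f i) \<beta> a b = (\<Sum>i\<in>I. defect (f i) \<beta> a b)"
  by (simp add: defect_def sum_distrib_right compress_sum mmul_def sum_subtractf sum.swap[of _ I])

lemma defect_sum_right: "defect \<alpha> (\<Sum>i\<in>I. f i) a b = (\<Sum>i\<in>I. defect \<alpha> (f i) a b)"
  by (simp add: defect_def sum_distrib_left compress_sum mmul_def sum_subtractf sum.swap[of _ I])

lemma defect_scalar_mult_left: "defect (c z * \<alpha>) \<beta> a b = c z * defect \<alpha> \<beta> a b"
  by (simp add: defect_def mult.assoc compress_scalar_mult mmul_def right_diff_distrib
      sum_distrib_left)

lemma defect_scalar_mult_right: "defect \<alpha> (c z * \<beta>) a b = c z * defect \<alpha> \<beta> a b"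
  by (simp add: defect_def mult_scalar_left_commute compress_scalar_mult mmul_def
      right_diff_distrib sum_distrib_left)

lemma defect_minus_left: "defect (- \<alpha>) \<beta> a b = - defect \<alpha> \<beta> a b"
  by (simp add: defect_def compress_minus mmul_def sum_negf)

lemma defect_minus_right: "defect \<alpha> (- \<beta>) a b = - defect \<alpha> \<beta> a b"
  by (simp add: defect_def compress_minus mmul_def sum_negf)

lemma defect_lincomb:
  "defect (\<Sum>mu\<in>S. c (z mu) * x mu) (\<Sum>nu\<in>S. c (w nu) * x nu) a b
    = (\<Sum>mu\<in>S. \<Sum>nu\<in>S. c (z mu * w nu) * defect (x mu) (x nu) a b)"
  unfolding defect_sum_left defect_scalar_mult_left
  unfolding defect_sum_right defect_scalar_mult_right
  by (simp add: sum_distrib_left scalar_mult mult.assoc)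

lemma pmat_eq: "pmat c x r u t = (\<Sum>mu\<in>{1..4}. c (pmat_coeff r u t mu) * x mu)"
  by (simp add: pmat_def pmat_coeff_def)

lemma adj_pmat: "st (pmat c x r u t) = (\<Sum>mu\<in>{1..4}. c (cnj (pmat_coeff r u t mu)) * x mu)"
  by (simp add: pmat_eq adj_sum adj_mult adj_scalar coords_selfadjoint scalar_commute)

lemma asd_block_defect:
  assumes "a < k" "b < k"
  shows "asd_block c st x n k U s t a b
    = (\<Sum>r<4. \<Sum>u<2. c (if r = 0 then -3 else 1) * defect (st (pmat c x r u s)) (pmat c x r u t) a b)"
proof -
  have "asd_block c st x n k U s t = sandwich (\<lambda>i j. \<Sum>r<4. \<Sum>u<2. c (if r = 0 then -3 else 1) *
      mmul n (mmul n (dg (st (pmat c x r u s))) (msub mid (mmul k U (madj st U)))) (dg (pmat c x r u t)) i j)"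
    by (simp add: asd_block_def sandwich_def)
  with assms show ?thesis
    by (simp add: sandwich_sum sandwich_scalar_mult sandwich_projection)
qed

lemma asd_block_coeff:
  assumes "a < k" "b < k"
  shows "asd_block c st x n k U s t a b
    = (\<Sum>mu\<in>{1..4}. \<Sum>nu\<in>{1..4}. c (asd_coeff s t mu nu) * defect (x mu) (x nu) a b)"
proof -
  have "asd_block c st x n k U s t a b = (\<Sum>r<4. \<Sum>u<2. \<Sum>mu\<in>{1..4}. \<Sum>nu\<in>{1..4}.
      c ((if r = 0 then -3 else 1) * (cnj (pmat_coeff r u s mu) * pmat_coeff r u t nu)) * defect (x mu) (x nu) a b)"
    unfolding asd_block_defect[OF assms] adj_pmat unfolding pmat_eq defect_lincomb
    by (simp add: sum_distrib_left scalar_mult mult.assoc)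
  also have "\<dots> = (\<Sum>mu\<in>{1..4}. \<Sum>nu\<in>{1..4}. \<Sum>r<4. \<Sum>u<2.
      c ((if r = 0 then -3 else 1) * (cnj (pmat_coeff r u s mu) * pmat_coeff r u t nu)) * defect (x mu) (x nu) a b)"
    by (subst sum.swap, subst (2) sum.swap, simp only: sum.swap[of _ "{..<2::nat}"])
  also have "\<dots> = (\<Sum>mu\<in>{1..4}. \<Sum>nu\<in>{1..4}. c (asd_coeff s t mu nu) * defect (x mu) (x nu) a b)"
    by (simp add: asd_coeff_def scalar_sum sum_distrib_right)
  finally show ?thesis .
qed

definition skew_defect :: "nat \<Rightarrow> nat \<Rightarrow> 'a mat" where
  "skew_defect mu nu a b = defect (x mu) (x nu) a b - defect (x nu) (x mu) a b"

lemma asd_block_skew_defect: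
  assumes "a < k" "b < k"
  shows "asd_block c st x n k U 0 0 a b = c \<i> * (skew_defect 1 2 a b + skew_defect 3 4 a b)"
    and "asd_block c st x n k U 0 1 a b
      = (skew_defect 2 4 a b - skew_defect 1 3 a b) - c \<i> * (skew_defect 1 4 a b + skew_defect 2 3 a b)"
    and "asd_block c st x n k U 1 0 a b
      = - (skew_defect 2 4 a b - skew_defect 1 3 a b) - c \<i> * (skew_defect 1 4 a b + skew_defect 2 3 a b)"
    and "asd_block c st x n k U 1 1 a b = - (c \<i> * (skew_defect 1 2 a b + skew_defect 3 4 a b))"
  \<comment> \<open>unfold before simplifying, which would turn the index \<open>1\<close> into \<open>Suc 0\<close>\<close>
  unfolding asd_block_coeff[OF assms] sum_1_4 asd_coeff_00 asd_coeff_01 asd_coeff_10 asd_coeff_11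
  by (simp_all add: skew_defect_def scalar_zero scalar_one scalar_minus algebra_simps)

lemma curv_skew_defect:
  assumes "a < k" "b < k"
  shows "curv c st x n k U 1 2 a b = skew_defect 1 2 a b"
    and "curv c st x n k U 3 4 a b = skew_defect 3 4 a b"
    and "curv c st x n k U 1 3 a b = skew_defect 2 4 a b"
    and "curv c st x n k U 2 4 a b = skew_defect 1 3 a b"
    and "curv c st x n k U 1 4 a b = - skew_defect 2 3 a b"
    and "curv c st x n k U 2 3 a b = - skew_defect 1 4 a b"
  by (simp_all add: curv_eq_defect[OF assms] generator_def skew_defect_def defect_minus_left
      defect_minus_right)

definition asd_skew_equations :: "nat \<Rightarrow> nat \<Rightarrow> bool" where
  "asd_skew_equations a b \<longleftrightarrow> skew_defect 1 2 a b + skew_defect 3 4 a b = 0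
     \<and> skew_defect 2 4 a b - skew_defect 1 3 a b = 0 \<and> skew_defect 1 4 a b + skew_defect 2 3 a b = 0"

lemma asd_equations_iff:
  "(meq k k (curv c st x n k U 1 2) (mneg (curv c st x n k U 3 4)) \<and>
    meq k k (curv c st x n k U 1 3) (curv c st x n k U 2 4) \<and>
    meq k k (curv c st x n k U 1 4) (mneg (curv c st x n k U 2 3)))
   \<longleftrightarrow> (\<forall>a<k. \<forall>b<k. asd_skew_equations a b)"
proof -
  have pointwise: "(curv c st x n k U 1 2 a b = - curv c st x n k U 3 4 a b
      \<and> curv c st x n k U 1 3 a b = curv c st x n k U 2 4 a b
      \<and> curv c st x n k U 1 4 a b = - curv c st x n k U 2 3 a b) \<longleftrightarrow> asd_skew_equations a b"
    if "a < k" "b < k" for a b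
    unfolding curv_skew_defect[OF that] minus_minus asd_skew_equations_def
    by (simp only: eq_neg_iff_add_eq_0 neg_eq_iff_add_eq_0 add.commute[of "skew_defect 2 3 a b"]
        eq_iff_diff_eq_0[of "skew_defect 2 4 a b"])
  have entrywise: "(meq k k (curv c st x n k U 1 2) (mneg (curv c st x n k U 3 4)) \<and>
    meq k k (curv c st x n k U 1 3) (curv c st x n k U 2 4) \<and>
    meq k k (curv c st x n k U 1 4) (mneg (curv c st x n k U 2 3)))
   \<longleftrightarrow> (\<forall>a<k. \<forall>b<k. curv c st x n k U 1 2 a b = - curv c st x n k U 3 4 a b
      \<and> curv c st x n k U 1 3 a b = curv c st x n k U 2 4 a b
      \<and> curv c st x n k U 1 4 a b = - curv c st x n k U 2 3 a b)"
    unfolding meq_def mneg_def by (simp only: all_conj_distrib imp_conjR)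
  show ?thesis
    unfolding entrywise by (intro all_less_cong2 pointwise)
qed

lemma asd_blocks_vanish_iff:
  "(\<forall>s<2. \<forall>t<2. meq k k (asd_block c st x n k U s t) (\<lambda>i j. 0))
   \<longleftrightarrow> (\<forall>a<k. \<forall>b<k. asd_skew_equations a b)"
proof -
  have pointwise: "(\<forall>s<2. \<forall>t<2. asd_block c st x n k U s t a b = 0) \<longleftrightarrow> asd_skew_equations a b"
    if "a < k" "b < k" for a b
    using block_system_eq_0_iff[of "skew_defect 1 2 a b + skew_defect 3 4 a b"
        "skew_defect 2 4 a b - skew_defect 1 3 a b" "skew_defect 1 4 a b + skew_defect 2 3 a b"]
    unfolding all_less_2 asd_block_skew_defect[OF that] neg_equal_0_iff_equal asd_skew_equations_def
    by blast
  have entrywise: "(\<forall>s<2. \<forall>t<2. meq k k (asd_block c st x n k U s t) (\<lambda>i j. 0))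
    \<longleftrightarrow> (\<forall>a<k. \<forall>b<k. \<forall>s<2. \<forall>t<2. asd_block c st x n k U s t a b = 0)"
    unfolding meq_def by blast
  show ?thesis
    unfolding entrywise by (intro all_less_cong2 pointwise)
qed

end

theorem mainTheorem4:
  fixes c :: "complex \<Rightarrow> 'a::ring_1" and st :: "'a \<Rightarrow> 'a" and x :: "nat \<Rightarrow> 'a"
    and U :: "'a mat" and n k :: nat
  assumes "star_alg c st"
    and "coords c st x"
    and "meq k k (mmul n (madj st U) U) mid"
  shows "(meq k k (curv c st x n k U 1 2) (mneg (curv c st x n k U 3 4)) \<and>
          meq k k (curv c st x n k U 1 3) (curv c st x n k U 2 4) \<and>
          meq k k (curv c st x n k U 1 4) (mneg (curv c st x n k U 2 3)))
         \<longleftrightarrow> (\<forall>s<2. \<forall>t<2. meq k k (asd_block c st x n k U s t) (\<lambda>i j. 0))"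
proof -
  interpret isometry_connection c st x n k U
    using assms by unfold_locales
  show ?thesis
    unfolding asd_equations_iff asd_blocks_vanish_iff ..
qed

end
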